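(* Let $C_\bullet(L)$ be the chain complex with $C_n(L)=\mathrm{id}_L\otimes_R B_+^{\otimes_R n}\otimes_R\mathrm{id}_L$ and differential $d(a_1\otimes\cdots\otimes a_n)=\sum_{i=1}^{n-1}(-1)^i a_1\otimes\cdots\otimes a_ia_{i+1}\otimes\cdots\otimes a_n$, and let $C_\bullet^{(m)}(L)$ be its subcomplex spanned by tensors of internal degree $m$. Then for all $n\ge1$: $H_n(C_\bullet^{(n)}(L))=0$; $H_n(C_\bullet^{(n-1)}(L))\cong k$ if $n\in\{3,4\}$ and $0$ otherwise; $H_n(C_\bullet^{(n-2)}(L))\cong k$ if $n\in\{7,8\}$ and $0$ otherwise; $H_n(C_\bullet^{(n-3)}(L))\cong k$ if $n\in\{11,12\}$ and $0$ otherwise.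
   Context: Let $k$ be a field with $\operatorname{char}k\neq2,3$. Let $B$ be the graded $k$-algebra with $k$-basis $\mathrm{id}_L,\mathrm{id}_{\mathcal O},\theta$ (degree $0$) and $\eta,\xi,\xi_L$ (degree $1$), whose only nonzero products of basis elements are $\mathrm{id}_L\mathrm{id}_L=\mathrm{id}_L$, $\mathrm{id}_{\mathcal O}\mathrm{id}_{\mathcal O}=\mathrm{id}_{\mathcal O}$, $\mathrm{id}_L\xi_L=\xi_L\mathrm{id}_L=\xi_L$, $\mathrm{id}_{\mathcal O}\xi=\xi\mathrm{id}_{\mathcal O}=\xi$, $\mathrm{id}_L\eta=\eta\,\mathrm{id}_{\mathcal O}=\eta$, $\mathrm{id}_{\mathcal O}\theta=\theta\,\mathrm{id}_L=\theta$, $\theta\eta=\xi$, $\eta\theta=\xi_L$. Let $R=k\langle\mathrm{id}_L,\mathrm{id}_{\mathcal O}\rangle$ and $B_+=\langle\theta,\eta,\xi,\xi_L\rangle$, so $B=R\oplus B_+$; tensor products are over $R$. Thus $B_+^{\otimes_R n}$ has $k$-basis the words $a_1\otimes\cdots\otimes a_n$, $a_i\in\{\theta,\eta,\xi,\xi_L\}$, with the right idempotent of $a_i$ equal to the left idempotent of $a_{i+1}$, where (left, right) idempotents are $\theta:(\mathrm{id}_{\mathcal O},\mathrm{id}_L)$, $\eta:(\mathrm{id}_L,\mathrm{id}_{\mathcal O})$, $\xi:(\mathrm{id}_{\mathcal O},\mathrm{id}_{\mathcal O})$, $\xi_L:(\mathrm{id}_L,\mathrm{id}_L)$; $\mathrm{id}_L\otimes_R(\cdot)\otimes_R\mathrm{id}_L$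 selects words whose first letter has left idempotent $\mathrm{id}_L$ and last letter right idempotent $\mathrm{id}_L$. The internal degree of a word is the sum of the degrees of its letters; $d$ preserves it. *)

theory Defs
  imports Main
begin

text \<open>Idempotents of R and the basis letters of B_+ (theta, eta, xi, xi_L).\<close>
datatype idem = IdL | IdO
datatype letter = Th | Et | Xi | XiL

fun lft :: "letter \<Rightarrow> idem" where
  "lft Th = IdO" | "lft Et = IdL" | "lft Xi = IdO" | "lft XiL = IdL"

fun rgt :: "letter \<Rightarrow> idem" where
  "rgt Th = IdL" | "rgt Et = IdO" | "rgt Xi = IdO" | "rgt XiL = IdL"

fun ldeg :: "letter \<Rightarrow> int" where
  "ldeg Th = 0" | "ldeg Et = 1" | "ldeg Xi = 1" | "ldeg XiL = 1"

definition wdeg :: "letter list \<Rightarrow> int" where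
  "wdeg w = sum_list (map ldeg w)"

fun mult :: "letter \<Rightarrow> letter \<Rightarrow> letter option" where
  "mult Th Et = Some Xi"
| "mult Et Th = Some XiL"
| "mult _ _ = None"

definition composable :: "letter list \<Rightarrow> bool" where
  "composable w \<longleftrightarrow> (\<forall>j. Suc j < length w \<longrightarrow> rgt (w ! j) = lft (w ! Suc j))"

text \<open>Basis words of C_n(L) = id_L (B_+)^{\<otimes> n} id_L, for n \<ge> 1.\<close>
definition Cword :: "nat \<Rightarrow> letter list \<Rightarrow> bool" where
  "Cword n w \<longleftrightarrow> length w = n \<and> w \<noteq> [] \<and> composable w \<and>
     lft (hd w) = IdL \<and> rgt (last w) = IdL"

definition Cwords :: "nat \<Rightarrow> letter list set" where
  "Cwords n = {w. Cword n w}"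

text \<open>Merge positions j, j+1 (0-based; this is a_{j+1} a_{j+2} in 1-based notation).\<close>
definition merge :: "nat \<Rightarrow> letter list \<Rightarrow> letter list option" where
  "merge j w = (case mult (w ! j) (w ! Suc j) of
       None \<Rightarrow> None
     | Some c \<Rightarrow> Some (take j w @ c # drop (Suc (Suc j)) w))"

text \<open>Coefficient of the basis word w in d(v); the 1-based index i = j+1 carries sign (-1)^i.\<close>
definition dcoef :: "letter list \<Rightarrow> letter list \<Rightarrow> 'k::comm_ring_1" where
  "dcoef v w = (\<Sum>j<length v - 1.
      (case merge j v of None \<Rightarrow> 0 | Some u \<Rightarrow> if u = w then (-1) ^ (Suc j) else 0))"

text \<open>Chains are k-valued coefficient functions on words.
  The differential d : C_n(L) \<rightarrow> C_{n-1}(L), extended linearly from basis words.\<close>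
definition dd :: "nat \<Rightarrow> (letter list \<Rightarrow> 'k::comm_ring_1) \<Rightarrow> (letter list \<Rightarrow> 'k)" where
  "dd n c = (\<lambda>w. \<Sum>v\<in>Cwords n. c v * dcoef v w)"

definition chains :: "nat \<Rightarrow> int \<Rightarrow> (letter list \<Rightarrow> 'k::comm_ring_1) set" where
  "chains n m = {c. \<forall>w. c w \<noteq> 0 \<longrightarrow> w \<in> Cwords n \<and> wdeg w = m}"

definition cycles :: "nat \<Rightarrow> int \<Rightarrow> (letter list \<Rightarrow> 'k::comm_ring_1) set" where
  "cycles n m = {c \<in> chains n m. dd n c = (\<lambda>_. 0)}"

definition boundaries :: "nat \<Rightarrow> int \<Rightarrow> (letter list \<Rightarrow> 'k::comm_ring_1) set" where
  "boundaries n m = dd (Suc n) ` chains (Suc n) m"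

definition H_zero :: "('a \<Rightarrow> 'k::field) set \<Rightarrow> ('a \<Rightarrow> 'k) set \<Rightarrow> bool" where
  "H_zero Z B \<longleftrightarrow> Z \<subseteq> B"

text \<open>H = Z/B is isomorphic to k: spanned by the class of a cycle z which is not a boundary.\<close>
definition H_iso_k :: "('a \<Rightarrow> 'k::field) set \<Rightarrow> ('a \<Rightarrow> 'k) set \<Rightarrow> bool" where
  "H_iso_k Z B \<longleftrightarrow> (\<exists>z\<in>Z. z \<notin> B \<and>
      (\<forall>c\<in>Z. \<exists>a. \<exists>b\<in>B. c = (\<lambda>x. a * z x + b x)))"

end

theory Submission
  imports Defs
begin

(* A chain is a coefficient function on basis words, so the differential d (which merges
   adjacent letters) is computed coefficientwise by the dual operation: the coefficient of
   a word w in d c collects, with sign, the coefficients of c on the words obtained from w by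
   splitting one loop letter xi = theta eta or xi_L = eta theta into its two factors.

   To set up a recursion we allow words starting at either idempotent s (always ending at L);
   C_n(L) is the case s = L.  For words of length n + 2 starting at s, three explicit maps
   (an inclusion "attach", a projection "contract" and a homotopy "htpy") exhibit the
   complex in length n + 2 as a deformation retract of the complex in length n starting at
   the opposite idempotent, with internal degree shifted by 1 + deg(arrow out of s).  An
   abstract transfer lemma then shows that the homology in length n + 2 vanishes, resp. is
   one-dimensional, exactly when it does in length n.  Together with the lengths 1 and 2,
   computed by hand, this gives a closed numerical criterion for all n, s and degrees m;
   finally the coefficientwise differential is identified with the differential d of the
   statement, and the four cases of the theorem are read off from the criterion. *)

text \<open>Every letter of B_+ either is a loop \<xi>, \<xi>_L or the unique arrow
  \<theta>, \<eta> leaving an idempotent; a loop factors as the product of two arrows.\<close>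

fun opp :: "idem \<Rightarrow> idem" where "opp IdL = IdO" | "opp IdO = IdL"
fun arrow :: "idem \<Rightarrow> letter" where "arrow IdL = Et" | "arrow IdO = Th"
fun loop :: "idem \<Rightarrow> letter" where "loop IdL = XiL" | "loop IdO = Xi"

definition is_loop :: "letter \<Rightarrow> bool" where "is_loop a \<longleftrightarrow> a = Xi \<or> a = XiL"

fun factor :: "letter \<Rightarrow> letter list" where
  "factor Xi = [Th, Et]" | "factor XiL = [Et, Th]" | "factor a = [a]"

lemma is_loop_simps[simp]: "is_loop Xi" "is_loop XiL" "\<not> is_loop Th" "\<not> is_loop Et"
  by (auto simp: is_loop_def)

lemma letter_simps[simp]:
  "opp (opp s) = s" "opp s \<noteq> s" "s \<noteq> opp s"
  "lft (arrow s) = s" "rgt (arrow s) = opp s" "lft (loop s) = s" "rgt (loop s) = s"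
  "ldeg (loop s) = 1" "is_loop (loop s)" "\<not> is_loop (arrow s)" "factor (loop s) = [arrow s, arrow (opp s)]"
  "arrow s \<noteq> loop s'" "loop s' \<noteq> arrow s" "arrow s = arrow s' \<longleftrightarrow> s = s'" "loop s = loop s' \<longleftrightarrow> s = s'"
  by (cases s; cases s'; simp)+

lemma ldeg_arrow_pair: "ldeg (arrow s) + ldeg (arrow (opp s)) = 1"
  by (cases s) auto

section \<open>The differential on coefficient functions\<close>

text \<open>unmerge p w replaces the letter at position p by its factorisation;
  the words merging to w at position p are exactly these.\<close>
definition unmerge :: "nat \<Rightarrow> letter list \<Rightarrow> letter list" where
  "unmerge p w = take p w @ factor (w ! p) @ drop (Suc p) w"

definition sgn_at :: "nat \<Rightarrow> 'k::comm_ring_1" where "sgn_at p = (-1) ^ Suc p"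

definition dc :: "(letter list \<Rightarrow> 'k::comm_ring_1) \<Rightarrow> letter list \<Rightarrow> 'k" where
  "dc c w = (\<Sum>p<length w. if is_loop (w ! p) then sgn_at p * c (unmerge p w) else 0)"

lemma sgn_at_simps[simp]: "sgn_at 0 = -1" "sgn_at (Suc p) = - sgn_at p"
  by (auto simp: sgn_at_def)

lemma unmerge_0[simp]: "unmerge 0 (a # u) = factor a @ u"
  by (simp add: unmerge_def)

lemma unmerge_Suc[simp]: "unmerge (Suc p) (a # u) = a # unmerge p u"
  by (simp add: unmerge_def)

lemma length_unmerge: "p < length w \<Longrightarrow> is_loop (w ! p) \<Longrightarrow> length (unmerge p w) = Suc (length w)"
  by (cases "w ! p") (auto simp: unmerge_def)

lemma dc_Nil[simp]: "dc c [] = 0"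
  by (simp add: dc_def)

lemma dc_Cons: "dc c (a # u) = (if is_loop a then - c (factor a @ u) else 0) +
   (\<Sum>p<length u. if is_loop (u ! p) then - (sgn_at p * c (a # unmerge p u)) else 0)"
  unfolding dc_def
  by (simp add: sum.lessThan_Suc_shift del: sum.lessThan_Suc; rule sum.cong; simp)

lemma dc_Cons2: "dc c (a # b # u) = (if is_loop a then - c (factor a @ b # u) else 0) +
   (if is_loop b then c (a # factor b @ u) else 0) +
   (\<Sum>p<length u. if is_loop (u ! p) then sgn_at p * c (a # b # unmerge p u) else 0)"
  by (simp add: dc_Cons sum.lessThan_Suc_shift del: sum.lessThan_Suc; rule sum.cong; simp)

lemma dc_single: "dc c [a] = (if is_loop a then - c (factor a) else 0)"
  by (simp add: dc_Cons)

lemma dc_pair: "dc c [a, b] = (if is_loop a then - c (factor a @ [b]) else 0) +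
   (if is_loop b then c (a # factor b) else 0)"
  by (simp add: dc_Cons2)

lemma dc_length:
  assumes "\<And>v. c v \<noteq> 0 \<Longrightarrow> length v = N" and "Suc (length w) \<noteq> N"
  shows "dc c w = 0"
  unfolding dc_def
proof (rule sum.neutral, rule ballI)
  fix p assume p: "p \<in> {..<length w}"
  show "(if is_loop (w ! p) then sgn_at p * c (unmerge p w) else 0) = 0"
  proof (cases "is_loop (w ! p)")
    case True
    then have "length (unmerge p w) = Suc (length w)" using p length_unmerge by simp
    then have "c (unmerge p w) = 0" using assms by metis
    then show ?thesis by simp
  qed simp
qed

lemma dc_add: "dc (\<lambda>w. f w + g w) w = dc f w + dc g w"
  unfolding dc_def by (auto simp add: sum.distrib[symmetric] distrib_left intro!: sum.cong)

definition words :: "idem \<Rightarrow> nat \<Rightarrow> letter list set" where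
  "words s n = {w. length w = n \<and> w \<noteq> [] \<and> composable w \<and> lft (hd w) = s \<and> rgt (last w) = IdL}"

definition ch :: "idem \<Rightarrow> nat \<Rightarrow> int \<Rightarrow> (letter list \<Rightarrow> 'k::field) set" where
  "ch s n m = {c. \<forall>w. c w \<noteq> 0 \<longrightarrow> w \<in> words s n \<and> wdeg w = m}"

definition cyc :: "idem \<Rightarrow> nat \<Rightarrow> int \<Rightarrow> (letter list \<Rightarrow> 'k::field) set" where
  "cyc s n m = {c \<in> ch s n m. dc c = (\<lambda>_. 0)}"

definition bnd :: "idem \<Rightarrow> nat \<Rightarrow> int \<Rightarrow> (letter list \<Rightarrow> 'k::field) set" where
  "bnd s n m = dc ` ch s (Suc n) m"

lemma composable_single[simp]: "composable [a]"
  by (simp add: composable_def)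

lemma composable_Cons2[simp]: "composable (a # b # w) \<longleftrightarrow> rgt a = lft b \<and> composable (b # w)"
  unfolding composable_def
proof (intro iffI conjI allI impI)
  assume "\<forall>j. Suc j < length (a # b # w) \<longrightarrow> rgt ((a # b # w) ! j) = lft ((a # b # w) ! Suc j)"
  then show "rgt a = lft b" and "\<And>j. Suc j < length (b # w) \<Longrightarrow> rgt ((b # w) ! j) = lft ((b # w) ! Suc j)"
    by (metis length_Cons nth_Cons_0 nth_Cons_Suc zero_less_Suc Suc_mono)+
next
  fix j assume "rgt a = lft b \<and> (\<forall>j. Suc j < length (b # w) \<longrightarrow> rgt ((b # w) ! j) = lft ((b # w) ! Suc j))"
    and "Suc j < length (a # b # w)"
  then show "rgt ((a # b # w) ! j) = lft ((a # b # w) ! Suc j)"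
    by (cases j) auto
qed

lemma wdeg_Nil[simp]: "wdeg [] = 0"
  by (simp add: wdeg_def)

lemma wdeg_Cons[simp]: "wdeg (a # w) = ldeg a + wdeg w"
  by (simp add: wdeg_def)

lemma words_Nil[simp]: "[] \<notin> words s n"
  by (simp add: words_def)

lemma words_single[simp]: "[a] \<in> words s n \<longleftrightarrow> n = 1 \<and> lft a = s \<and> rgt a = IdL"
  by (auto simp: words_def)

lemma words_Cons2: "a # b # u \<in> words s n \<longleftrightarrow>
    n = Suc (length (b # u)) \<and> lft a = s \<and> rgt a = lft b \<and> b # u \<in> words (lft b) (length (b # u))"
  by (auto simp: words_def)

lemma words_Cons: "a # u \<in> words s n \<longleftrightarrow> n = Suc (length u) \<and> lft a = s \<and> (u = [] \<longrightarrow> rgt a = IdL) \<and>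
   (u \<noteq> [] \<longrightarrow> rgt a = lft (hd u) \<and> u \<in> words (rgt a) (length u))"
  by (cases u) (auto simp: words_Cons2)

lemma composable_Cons: "composable (a # u) \<longleftrightarrow> u = [] \<or> rgt a = lft (hd u) \<and> composable u"
  by (cases u) auto

lemma ch_out: "c \<in> ch s n m \<Longrightarrow> w \<notin> words s n \<Longrightarrow> c w = 0"
  by (auto simp: ch_def)

lemma ch_deg: "c \<in> ch s n m \<Longrightarrow> wdeg w \<noteq> m \<Longrightarrow> c w = 0"
  by (auto simp: ch_def)

lemma ch_length: "c \<in> ch s n m \<Longrightarrow> length w \<noteq> n \<Longrightarrow> c w = 0"
  by (auto simp: ch_def words_def)

lemma ch_add: "f \<in> ch s n m \<Longrightarrow> g \<in> ch s n m \<Longrightarrow> (\<lambda>w. f w + g w) \<in> ch s n m"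
  by (auto simp: ch_def) (metis add.right_neutral)+

lemma ch_zero: "(\<lambda>_. 0) \<in> ch s n m"
  by (auto simp: ch_def)

lemma ch_point: "(\<beta> \<noteq> 0 \<Longrightarrow> v \<in> words s n \<and> wdeg v = m) \<Longrightarrow> (\<lambda>w. if w = v then \<beta> else 0) \<in> ch s n m"
  by (auto simp: ch_def)

lemma bnd_add: "b \<in> bnd s n m \<Longrightarrow> b' \<in> bnd s n m \<Longrightarrow> (\<lambda>w. b w + b' w) \<in> bnd s n m"
proof -
  assume "b \<in> bnd s n m" "b' \<in> bnd s n m"
  then obtain x x' where "x \<in> ch s (Suc n) m" "x' \<in> ch s (Suc n) m" "b = dc x" "b' = dc x'"
    by (auto simp: bnd_def)
  then show ?thesis
    unfolding bnd_def by (auto simp: image_iff dc_add[symmetric] intro!: bexI[OF _ ch_add])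
qed

section \<open>The retraction onto words starting at the opposite idempotent\<close>

text \<open>For words starting at s, the word arrow s \<otimes> loop (opp s) \<otimes> u is a cycle-preserving
  copy of u.  attach s puts a chain on the u's into this position,
  contract s reads it back (also collecting the terms loop s \<otimes> arrow s \<otimes> u
  which the differential links to it), and htpy s is the contracting homotopy
  for everything else.\<close>

definition attach :: "idem \<Rightarrow> (letter list \<Rightarrow> 'k::comm_ring_1) \<Rightarrow> letter list \<Rightarrow> 'k" where
  "attach s z w = (case w of a # b # u \<Rightarrow> if a = arrow s \<and> b = loop (opp s) then z u else 0 | _ \<Rightarrow> 0)"

definition contract :: "idem \<Rightarrow> (letter list \<Rightarrow> 'k::comm_ring_1) \<Rightarrow> letter list \<Rightarrow> 'k" where
  "contract s c v = c (arrow s # loop (opp s) # v) + c (loop s # arrow s # v)"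

definition htpy :: "idem \<Rightarrow> (letter list \<Rightarrow> 'k::comm_ring_1) \<Rightarrow> letter list \<Rightarrow> 'k" where
  "htpy s c w = (case w of a # b # u \<Rightarrow> if a = arrow s \<and> b = arrow (opp s) then - c (loop s # u) else 0 | _ \<Rightarrow> 0)"

text \<open>The internal degree lost by dropping the prefix arrow s \<otimes> loop (opp s) is
  1 + shift s.\<close>
definition shift :: "idem \<Rightarrow> int" where "shift s = ldeg (arrow s)"

lemma attach_simps[simp]:
  "attach s z [] = 0" "attach s z [a] = 0"
  "attach s z (a # b # u) = (if a = arrow s \<and> b = loop (opp s) then z u else 0)"
  by (simp_all add: attach_def)

lemma htpy_simps[simp]:
  "htpy s c [] = 0" "htpy s c [a] = 0"
  "htpy s c (a # b # u) = (if a = arrow s \<and> b = arrow (opp s) then - c (loop s # u) else 0)"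
  by (simp_all add: htpy_def)

lemma attach_linear: "attach s (\<lambda>x. a * f x + g x) = (\<lambda>w. a * attach s f w + attach s g w)"
proof
  fix w show "attach s (\<lambda>x. a * f x + g x) w = a * attach s f w + attach s g w"
    by (cases w rule: remdups_adj.cases) simp_all
qed

lemma attach_zero[simp]: "attach s (\<lambda>_. 0) = (\<lambda>_. 0)"
proof
  fix w show "attach s (\<lambda>_. 0) w = 0" by (cases w rule: remdups_adj.cases) simp_all
qed

lemma contract_attach: "contract s (attach s z) = z"
  by (auto simp: contract_def)

lemma attach_factor:
  "is_loop a \<Longrightarrow> attach s z (factor a @ v) = 0"
  "is_loop b \<Longrightarrow> attach s z (a # factor b @ v) = 0"
  by (cases a; cases s; simp) (cases b; cases s; simp)

lemma dc_attach: "dc (attach s z) w = attach s (dc z) w"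
proof (cases w rule: remdups_adj.cases)
  case 1 then show ?thesis by simp
next
  case (2 a) then show ?thesis
    using attach_factor(1)[of a s z "[]"] by (simp add: dc_single)
next
  case (3 a b u)
  have "dc (attach s z) (a # b # u) = attach s (dc z) (a # b # u)"
  proof (cases "a = arrow s \<and> b = loop (opp s)")
    case True then show ?thesis
      by (simp only: dc_Cons2) (simp add: attach_factor dc_def cong: if_cong)
  next
    case False
    then have "\<And>p. attach s z (a # b # unmerge p u) = 0" by auto
    then show ?thesis using False
      by (simp only: dc_Cons2 cong: if_cong) (auto simp add: attach_factor cong: if_cong)
  qed
  then show ?thesis using 3 by simp
qed

lemma contract_dc: "contract s (dc b) v = dc (contract s b) v"
  unfolding contract_def
  by (simp only: dc_Cons2)
    (simp add: dc_def contract_def sum.distrib[symmetric]; rule sum.cong; simp add: distrib_left)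

lemma ch_htpy:
  assumes c: "c \<in> ch s n m" shows "htpy s c \<in> ch s (Suc n) m"
  unfolding ch_def
proof (clarify)
  fix w assume "htpy s c w \<noteq> 0"
  then obtain u where w: "w = arrow s # arrow (opp s) # u" and cu: "c (loop s # u) \<noteq> 0"
    by (cases w rule: remdups_adj.cases) (auto split: if_splits)
  from cu c have W: "loop s # u \<in> words s n" and D: "wdeg (loop s # u) = m"
    by (auto simp: ch_def)
  from D have "wdeg w = m" using w ldeg_arrow_pair[of s] by simp
  moreover have "w \<in> words s (Suc n)" using W unfolding w by (auto simp: words_Cons)
  ultimately show "w \<in> words s (Suc n) \<and> wdeg w = m" by simp
qed

lemma ch_attach:
  assumes z: "z \<in> ch (opp s) n m'" and m: "m = m' + 1 + shift s"
  shows "attach s z \<in> ch s (Suc (Suc n)) m"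
  unfolding ch_def
proof (clarify)
  fix w assume "attach s z w \<noteq> 0"
  then obtain u where w: "w = arrow s # loop (opp s) # u" and zu: "z u \<noteq> 0"
    by (cases w rule: remdups_adj.cases) (auto split: if_splits)
  from zu z have W: "u \<in> words (opp s) n" and D: "wdeg u = m'" by (auto simp: ch_def)
  from D have "wdeg w = m" using w m by (simp add: shift_def)
  moreover have "w \<in> words s (Suc (Suc n))"
    using W unfolding w by (auto simp: words_Cons words_def composable_Cons)
  ultimately show "w \<in> words s (Suc (Suc n)) \<and> wdeg w = m" by simp
qed

lemma ch_contract:
  assumes c: "c \<in> ch s (Suc (Suc n)) m" and n: "n \<ge> 1"
  shows "contract s c \<in> ch (opp s) n (m - 1 - shift s)"
  unfolding ch_def
proof (clarify)
  fix v assume "contract s c v \<noteq> 0"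
  then have "c (arrow s # loop (opp s) # v) \<noteq> 0 \<or> c (loop s # arrow s # v) \<noteq> 0"
    by (auto simp: contract_def)
  then obtain a b where ab: "(a, b) \<in> {(arrow s, loop (opp s)), (loop s, arrow s)}" and
      "c (a # b # v) \<noteq> 0"
    by blast
  with c have W: "a # b # v \<in> words s (Suc (Suc n))" and D: "wdeg (a # b # v) = m"
    by (auto simp: ch_def)
  from W n have "v \<noteq> []" by (auto simp: words_def)
  with W ab have "v \<in> words (opp s) n" by (auto simp: words_Cons)
  moreover from D ab have "wdeg v = m - 1 - shift s" by (auto simp: shift_def)
  ultimately show "v \<in> words (opp s) n \<and> wdeg v = m - 1 - shift s" by simp
qed

lemma dc_htpy:
  "dc (htpy s c) (a # b # u) =
     (if a = loop s then c (a # b # u) else 0) +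
     (if a = arrow s \<and> b = loop (opp s) then - c (loop s # arrow s # u) else 0) +
     (if a = arrow s \<and> b = arrow (opp s)
      then - (\<Sum>p<length u. if is_loop (u ! p) then sgn_at p * c (loop s # unmerge p u) else 0) else 0)"
proof -
  have first: "htpy s c (factor a' @ b' # u') = (if a' = loop s then - c (a' # b' # u') else 0)"
    if "is_loop a'" for a' b' u' using that by (cases a'; cases s; simp)
  have second: "htpy s c (a' # factor b' @ u') =
      (if a' = arrow s \<and> b' = loop (opp s) then - c (loop s # arrow s # u') else 0)"
    if "is_loop b'" for a' b' u' using that by (cases b'; cases s; auto)
  have rest: "(\<Sum>p<length u. if is_loop (u ! p) then sgn_at p * htpy s c (a # b # unmerge p u) else 0) =
     (if a = arrow s \<and> b = arrow (opp s)
      then - (\<Sum>p<length u. if is_loop (u ! p) then sgn_at p * c (loop s # unmerge p u) else 0) else 0)"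
  proof (cases "a = arrow s \<and> b = arrow (opp s)")
    case True then show ?thesis by (auto simp: sum_negf[symmetric] intro!: sum.cong)
  next
    case False then show ?thesis by (auto intro!: sum.neutral)
  qed
  show ?thesis
    by (simp only: dc_Cons2 rest) (simp add: first second)
qed

lemma cycle_decomposition:
  assumes c: "c \<in> ch s n m" and cycle: "dc c = (\<lambda>_. 0)" and n: "n \<ge> 2"
  shows "c w = dc (htpy s c) w + attach s (contract s c) w"
proof (cases w rule: remdups_adj.cases)
  case 1 then show ?thesis using ch_out[OF c] by simp
next
  case (2 a)
  have "c [a] = 0" "c [loop s] = 0" using ch_length[OF c] n by auto
  then show ?thesis using 2 by (cases a; cases s; simp add: dc_single)
next
  case (3 a b u)
  have off_support: "c (a' # b' # u) = 0" if "lft a' \<noteq> s \<or> rgt a' \<noteq> lft b'" for a' b'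
    using ch_out[OF c] that by (auto simp: words_Cons2)
  have cycle_at_loop: "c (arrow s # arrow (opp s) # u) =
      - (\<Sum>p<length u. if is_loop (u ! p) then sgn_at p * c (loop s # unmerge p u) else 0)"
  proof -
    have "(\<Sum>p<length u. if is_loop (u ! p) then - (sgn_at p * c (loop s # unmerge p u)) else 0) =
        - (\<Sum>p<length u. if is_loop (u ! p) then sgn_at p * c (loop s # unmerge p u) else 0)"
      by (auto simp: sum_negf[symmetric] intro!: sum.cong)
    then show ?thesis using fun_cong[OF cycle, of "loop s # u"] by (simp add: dc_Cons) (metis minus_minus)
  qed
  consider (at_loop) "a = loop s" | (back_and_forth) "a = arrow s" "b = arrow (opp s)"
    | (attached) "a = arrow s" "b = loop (opp s)"
    | (outside) "c (a # b # u) = 0" "a \<noteq> loop s" "a \<noteq> arrow s \<or> b \<noteq> arrow (opp s) \<and> b \<noteq> loop (opp s)"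
    by (cases a; cases b; cases s; simp add: off_support)
  then show ?thesis
  proof cases
    case at_loop then show ?thesis by (simp add: 3 dc_htpy)
  next
    case back_and_forth then show ?thesis by (simp add: 3 dc_htpy cycle_at_loop)
  next
    case attached then show ?thesis by (simp add: 3 dc_htpy contract_def)
  next
    case outside then show ?thesis by (auto simp: 3 dc_htpy)
  qed
qed

section \<open>Transfer of homology along a deformation retraction\<close>

lemma homology_transfer:
  fixes Z B :: "('a \<Rightarrow> 'k::field) set" and Z' B' :: "('b \<Rightarrow> 'k) set"
    and f :: "('a \<Rightarrow> 'k) \<Rightarrow> 'b \<Rightarrow> 'k" and g :: "('b \<Rightarrow> 'k) \<Rightarrow> 'a \<Rightarrow> 'k"
  assumes f_cyc: "\<And>c. c \<in> Z \<Longrightarrow> f c \<in> Z'" and g_cyc: "\<And>c. c \<in> Z' \<Longrightarrow> g c \<in> Z"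
    and f_bnd: "\<And>b. b \<in> B \<Longrightarrow> f b \<in> B'" and g_bnd: "\<And>b. b \<in> B' \<Longrightarrow> g b \<in> B"
    and f_g: "\<And>c. c \<in> Z' \<Longrightarrow> f (g c) = c"
    and g_linear: "\<And>a u v. g (\<lambda>x. a * u x + v x) = (\<lambda>x. a * g u x + g v x)"
    and B_add: "\<And>b b'. b \<in> B \<Longrightarrow> b' \<in> B \<Longrightarrow> (\<lambda>x. b x + b' x) \<in> B"
    and retract: "\<And>c. c \<in> Z \<Longrightarrow> \<exists>b\<in>B. c = (\<lambda>x. b x + g (f c) x)"
  shows "H_zero Z' B' \<Longrightarrow> H_zero Z B"
    and "H_iso_k Z' B' \<Longrightarrow> H_iso_k Z B"
proof -
  assume zero: "H_zero Z' B'"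
  show "H_zero Z B"
    unfolding H_zero_def
  proof
    fix c assume c: "c \<in> Z"
    then have "g (f c) \<in> B" using zero f_cyc g_bnd by (auto simp: H_zero_def)
    moreover obtain b where "b \<in> B" and cb: "c = (\<lambda>x. b x + g (f c) x)" using retract[OF c] by blast
    ultimately have "(\<lambda>x. b x + g (f c) x) \<in> B" using B_add by blast
    then show "c \<in> B" using cb by simp
  qed
next
  assume "H_iso_k Z' B'"
  then obtain z' where z'_cyc: "z' \<in> Z'" and z'_nb: "z' \<notin> B'"
    and span: "\<And>c. c \<in> Z' \<Longrightarrow> \<exists>a. \<exists>b\<in>B'. c = (\<lambda>x. a * z' x + b x)"
    unfolding H_iso_k_def by blast
  have "g z' \<in> Z" using g_cyc[OF z'_cyc] .
  moreover have "g z' \<notin> B"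
    using f_bnd f_g[OF z'_cyc] z'_nb by metis
  moreover have "\<exists>a. \<exists>b\<in>B. c = (\<lambda>x. a * g z' x + b x)" if c: "c \<in> Z" for c
  proof -
    obtain a b' where b': "b' \<in> B'" and fc: "f c = (\<lambda>x. a * z' x + b' x)"
      using span[OF f_cyc[OF c]] by blast
    obtain b where b: "b \<in> B" and cb: "c = (\<lambda>x. b x + g (f c) x)" using retract[OF c] by blast
    have "c = (\<lambda>x. a * g z' x + (b x + g b' x))"
      using cb unfolding fc g_linear by (simp add: algebra_simps)
    moreover have "(\<lambda>x. b x + g b' x) \<in> B" using B_add[OF b g_bnd[OF b']] .
    ultimately show ?thesis by (intro exI[of _ a] bexI[of _ "\<lambda>x. b x + g b' x"]) simp_all
  qed
  ultimately show "H_iso_k Z B" unfolding H_iso_k_def by blast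
qed

lemma contract_cyc:
  assumes "c \<in> cyc s (Suc (Suc n)) m" "n \<ge> 1"
  shows "contract s c \<in> cyc (opp s) n (m - 1 - shift s)"
proof -
  have "dc (contract s c) = contract s (dc c)" by (rule ext) (rule contract_dc[symmetric])
  also have "\<dots> = (\<lambda>_. 0)" using assms by (auto simp: cyc_def contract_def)
  finally show ?thesis using assms ch_contract by (auto simp: cyc_def)
qed

lemma attach_cyc:
  assumes "z \<in> cyc (opp s) n (m - 1 - shift s)"
  shows "attach s z \<in> cyc s (Suc (Suc n)) m"
proof -
  have "dc (attach s z) = attach s (dc z)" by (rule ext) (rule dc_attach)
  also have "\<dots> = (\<lambda>_. 0)" using assms by (simp add: cyc_def)
  finally show ?thesis using assms ch_attach[of z s n "m - 1 - shift s" m] by (simp add: cyc_def)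
qed

lemma contract_bnd:
  assumes "b \<in> bnd s (Suc (Suc n)) m" "n \<ge> 1"
  shows "contract s b \<in> bnd (opp s) n (m - 1 - shift s)"
proof -
  obtain b0 where "b0 \<in> ch s (Suc (Suc (Suc n))) m" and b: "b = dc b0"
    using assms by (auto simp: bnd_def)
  then have "contract s b0 \<in> ch (opp s) (Suc n) (m - 1 - shift s)" using ch_contract[of b0 s "Suc n" m] by simp
  moreover have "contract s b = dc (contract s b0)" unfolding b by (rule ext) (rule contract_dc)
  ultimately show ?thesis by (simp add: bnd_def)
qed

lemma attach_bnd:
  assumes "b \<in> bnd (opp s) n (m - 1 - shift s)"
  shows "attach s b \<in> bnd s (Suc (Suc n)) m"
proof -
  obtain b0 where "b0 \<in> ch (opp s) (Suc n) (m - 1 - shift s)" and b: "b = dc b0"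
    using assms by (auto simp: bnd_def)
  then have "attach s b0 \<in> ch s (Suc (Suc (Suc n))) m" using ch_attach[of b0 s "Suc n" "m - 1 - shift s" m] by simp
  moreover have "attach s b = dc (attach s b0)" unfolding b by (rule ext) (rule dc_attach[symmetric])
  ultimately show ?thesis by (simp add: bnd_def)
qed

lemma cycle_homologous_attach:
  assumes "c \<in> cyc s (Suc (Suc n)) m"
  shows "\<exists>b\<in>bnd s (Suc (Suc n)) m. c = (\<lambda>w. b w + attach s (contract s c) w)"
proof -
  have c: "c \<in> ch s (Suc (Suc n)) m" "dc c = (\<lambda>_. 0)" using assms by (auto simp: cyc_def)
  have "dc (htpy s c) \<in> bnd s (Suc (Suc n)) m" using ch_htpy[OF c(1)] by (simp add: bnd_def)
  moreover have "c = (\<lambda>w. dc (htpy s c) w + attach s (contract s c) w)"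
    using cycle_decomposition[OF c] by auto
  ultimately show ?thesis by blast
qed

lemma reduction:
  assumes n: "n \<ge> 1"
  shows "H_zero (cyc (opp s) n (m - 1 - shift s) :: (letter list \<Rightarrow> 'k::field) set) (bnd (opp s) n (m - 1 - shift s))
           \<Longrightarrow> H_zero (cyc s (Suc (Suc n)) m :: (letter list \<Rightarrow> 'k) set) (bnd s (Suc (Suc n)) m)"
    and "H_iso_k (cyc (opp s) n (m - 1 - shift s) :: (letter list \<Rightarrow> 'k::field) set) (bnd (opp s) n (m - 1 - shift s))
           \<Longrightarrow> H_iso_k (cyc s (Suc (Suc n)) m :: (letter list \<Rightarrow> 'k) set) (bnd s (Suc (Suc n)) m)"
  using homology_transfer[where f = "contract s" and g = "attach s",
      OF contract_cyc[OF _ n] attach_cyc contract_bnd[OF _ n] attach_bnd contract_attach attach_linear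
         bnd_add cycle_homologous_attach]
  by blast+

lemma words_one: "w \<in> words s (Suc 0) \<longleftrightarrow> (\<exists>a. w = [a] \<and> lft a = s \<and> rgt a = IdL)"
  by (auto simp: words_def length_Suc_conv)

lemma words_two: "w \<in> words s 2 \<longleftrightarrow> (\<exists>a b. w = [a, b] \<and> lft a = s \<and> rgt a = lft b \<and> rgt b = IdL)"
  by (auto simp: words_def length_Suc_conv numeral_2_eq_2)

lemma words_L1: "w \<in> words IdL (Suc 0) \<longleftrightarrow> w = [XiL]"
proof -
  have "lft a = IdL \<and> rgt a = IdL \<longleftrightarrow> a = XiL" for a by (cases a) auto
  then show ?thesis by (auto simp: words_one)
qed

lemma words_O1: "w \<in> words IdO (Suc 0) \<longleftrightarrow> w = [Th]"
proof -
  have "lft a = IdO \<and> rgt a = IdL \<longleftrightarrow> a = Th" for a by (cases a) auto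
  then show ?thesis by (auto simp: words_one)
qed

lemma words_L2: "w \<in> words IdL 2 \<longleftrightarrow> w = [XiL, XiL] \<or> w = [Et, Th]"
proof -
  have "lft a = IdL \<and> rgt a = lft b \<and> rgt b = IdL \<longleftrightarrow> a = XiL \<and> b = XiL \<or> a = Et \<and> b = Th" for a b
    by (cases a; cases b) auto
  then show ?thesis by (auto simp: words_two)
qed

lemma words_O2: "w \<in> words IdO 2 \<longleftrightarrow> w = [Th, XiL] \<or> w = [Xi, Th]"
proof -
  have "lft a = IdO \<and> rgt a = lft b \<and> rgt b = IdL \<longleftrightarrow> a = Th \<and> b = XiL \<or> a = Xi \<and> b = Th" for a b
    by (cases a; cases b) auto
  then show ?thesis by (auto simp: words_two)
qed

section \<open>Homology in lengths one and two\<close>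

lemma dc_zero[simp]: "dc (\<lambda>_. 0) = (\<lambda>_. 0)"
  by (rule ext) (simp add: dc_def sum.neutral)

lemma zero_bnd: "(\<lambda>_. 0) \<in> bnd s n m"
  using ch_zero by (force simp: bnd_def)

lemma dc_point_length: "Suc (length w) \<noteq> length v \<Longrightarrow> dc (\<lambda>w. if w = v then \<beta> else 0) w = 0"
  by (rule dc_length[where N = "length v"]) (auto split: if_splits)

lemma H_zero_no_words:
  assumes "\<And>w. w \<in> words s n \<Longrightarrow> wdeg w \<noteq> m"
  shows "H_zero (cyc s n m :: (letter list \<Rightarrow> 'k::field) set) (bnd s n m)"
  unfolding H_zero_def
proof
  fix c :: "letter list \<Rightarrow> 'k" assume "c \<in> cyc s n m"
  then have c: "c \<in> ch s n m" by (simp add: cyc_def)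
  have "c = (\<lambda>_. 0)"
  proof
    fix w show "c w = 0" using ch_out[OF c, of w] ch_deg[OF c, of w] assms by blast
  qed
  then show "c \<in> bnd s n m" using zero_bnd by simp
qed

text \<open>Length one at L: the only word \<xi>_L is the boundary of - \<eta> \<otimes> \<theta>.\<close>
lemma homology_L1: "H_zero (cyc IdL 1 m :: (letter list \<Rightarrow> 'k::field) set) (bnd IdL 1 m)"
  unfolding H_zero_def
proof
  fix c :: "letter list \<Rightarrow> 'k" assume "c \<in> cyc IdL 1 m"
  then have c: "c \<in> ch IdL 1 m" by (simp add: cyc_def)
  define b where "b = (\<lambda>w. if w = [Et, Th] then - c [XiL] else 0)"
  have "b \<in> ch IdL 2 m" unfolding b_def
    by (rule ch_point) (use ch_deg[OF c, of "[XiL]"] in \<open>auto simp: words_Cons2\<close>)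
  moreover have "c = dc b"
  proof
    fix w show "c w = dc b w"
    proof (cases "length w = 1")
      case True then obtain a where "w = [a]" by (auto simp: length_Suc_conv)
      then show ?thesis using ch_out[OF c, of w] by (cases a) (simp_all add: words_L1 b_def dc_single)
    next
      case False then show ?thesis using ch_length[OF c] dc_point_length[of w "[Et, Th]"] by (simp add: b_def)
    qed
  qed
  ultimately show "c \<in> bnd IdL 1 m" by (auto simp: bnd_def numeral_2_eq_2)
qed

lemma homology_O1: "H_iso_k (cyc IdO 1 0 :: (letter list \<Rightarrow> 'k::field) set) (bnd IdO 1 0)"
proof -
  define z :: "letter list \<Rightarrow> 'k" where "z = (\<lambda>w. if w = [Th] then 1 else 0)"
  have "dc z = (\<lambda>_. 0)"
  proof
    fix w show "dc z w = 0" by (cases "w = []") (simp_all add: z_def dc_point_length)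
  qed
  moreover have "z \<in> ch IdO 1 0" unfolding z_def by (rule ch_point) simp
  ultimately have "z \<in> cyc IdO 1 0" by (simp add: cyc_def)
  moreover have "z \<notin> bnd IdO 1 0"
  proof
    assume "z \<in> bnd IdO 1 0"
    then obtain b :: "letter list \<Rightarrow> 'k" where "z = dc b" by (auto simp: bnd_def)
    then have "z [Th] = dc b [Th]" by simp
    then show False by (simp add: z_def dc_single)
  qed
  moreover have "\<exists>a. \<exists>b\<in>bnd IdO 1 0. c = (\<lambda>x. a * z x + b x)" if "c \<in> cyc IdO 1 0" for c
  proof -
    have c: "c \<in> ch IdO 1 0" using that by (simp add: cyc_def)
    have "c = (\<lambda>x. c [Th] * z x + 0)"
    proof
      fix w show "c w = c [Th] * z w + 0" using ch_out[OF c, of w] by (auto simp: z_def words_O1)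
    qed
    then show ?thesis by (intro exI[of _ "c [Th]"] bexI[OF _ zero_bnd])
  qed
  ultimately show ?thesis unfolding H_iso_k_def by blast
qed

text \<open>Length two at L: cycles vanish on \<eta> \<otimes> \<theta>, and \<xi>_L \<otimes> \<xi>_L is the
  boundary of \<xi>_L \<otimes> \<eta> \<otimes> \<theta>.\<close>
lemma homology_L2: "H_zero (cyc IdL 2 m :: (letter list \<Rightarrow> 'k::field) set) (bnd IdL 2 m)"
  unfolding H_zero_def
proof
  fix c :: "letter list \<Rightarrow> 'k" assume "c \<in> cyc IdL 2 m"
  then have c: "c \<in> ch IdL 2 m" and cycle: "dc c = (\<lambda>_. 0)" by (simp_all add: cyc_def)
  have "c [Et, Th] = 0" using fun_cong[OF cycle, of "[XiL]"] by (simp add: dc_single)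
  define b where "b = (\<lambda>w. if w = [XiL, Et, Th] then c [XiL, XiL] else 0)"
  have "b \<in> ch IdL 3 m" unfolding b_def
    by (rule ch_point) (use ch_deg[OF c, of "[XiL, XiL]"] in \<open>auto simp: words_Cons2\<close>)
  moreover have "c = dc b"
  proof
    fix w show "c w = dc b w"
    proof (cases "length w = 2")
      case True then obtain p q where "w = [p, q]" by (auto simp: length_Suc_conv numeral_2_eq_2)
      then show ?thesis using ch_out[OF c, of w] \<open>c [Et, Th] = 0\<close>
        by (cases p; cases q) (simp_all add: words_L2 b_def dc_pair)
    next
      case False then show ?thesis using ch_length[OF c] dc_point_length[of w "[XiL, Et, Th]"] by (simp add: b_def)
    qed
  qed
  ultimately show "c \<in> bnd IdL 2 m" by (auto simp: bnd_def numeral_3_eq_3 numeral_2_eq_2)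
qed

lemma chain_O2_decomposition:
  assumes c: "c \<in> ch IdO 2 1"
  shows "c = (\<lambda>x. (c [Th, XiL] + c [Xi, Th]) * (if x = [Th, XiL] then 1 else 0)
    + dc (\<lambda>w. if w = [Th, Et, Th] then - c [Xi, Th] else 0) x)"
proof
  fix w show "c w = (c [Th, XiL] + c [Xi, Th]) * (if w = [Th, XiL] then 1 else 0)
    + dc (\<lambda>w. if w = [Th, Et, Th] then - c [Xi, Th] else 0) w"
  proof (cases "length w = 2")
    case True then obtain p q where "w = [p, q]" by (auto simp: length_Suc_conv numeral_2_eq_2)
    then show ?thesis using ch_out[OF c, of w] by (cases p; cases q) (simp_all add: words_O2 dc_pair)
  next
    case False
    then show ?thesis using ch_length[OF c, of w] dc_point_length[of w "[Th, Et, Th]"] by auto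
  qed
qed

text \<open>Length two at O: \<theta> \<otimes> \<xi>_L and \<xi> \<otimes> \<theta> are homologous cycles
  (their difference bounds \<theta> \<otimes> \<eta> \<otimes> \<theta>) spanning the homology, in degree 1.\<close>
lemma homology_O2: "H_iso_k (cyc IdO 2 1 :: (letter list \<Rightarrow> 'k::field) set) (bnd IdO 2 1)"
proof -
  define z :: "letter list \<Rightarrow> 'k" where "z = (\<lambda>w. if w = [Th, XiL] then 1 else 0)"
  have "dc z = (\<lambda>_. 0)"
  proof
    fix w show "dc z w = 0"
    proof (cases "length w = 1")
      case True then obtain a where "w = [a]" by (auto simp: length_Suc_conv)
      then show ?thesis by (cases a) (simp_all add: z_def dc_single)
    next
      case False then show ?thesis using dc_point_length[of w "[Th, XiL]"] by (simp add: z_def)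
    qed
  qed
  moreover have "z \<in> ch IdO 2 1" unfolding z_def by (rule ch_point) (simp add: words_Cons2)
  ultimately have "z \<in> cyc IdO 2 1" by (simp add: cyc_def)
  moreover have "z \<notin> bnd IdO 2 1"
  proof
    assume "z \<in> bnd IdO 2 1"
    then obtain b :: "letter list \<Rightarrow> 'k" where "z = dc b" by (auto simp: bnd_def)
    then have "z [Th, XiL] = dc b [Th, XiL]" "z [Xi, Th] = dc b [Xi, Th]" by simp_all
    then show False by (simp add: z_def dc_pair)
  qed
  moreover have "\<exists>a. \<exists>b\<in>bnd IdO 2 1. c = (\<lambda>x. a * z x + b x)" if "c \<in> cyc IdO 2 1" for c
  proof -
    have c: "c \<in> ch IdO 2 1" using that by (simp add: cyc_def)
    define b where "b = (\<lambda>w. if w = [Th, Et, Th] then - c [Xi, Th] else 0)"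
    have "b \<in> ch IdO 3 1" unfolding b_def by (rule ch_point) (simp add: words_Cons2)
    then have "dc b \<in> bnd IdO 2 1" by (simp add: bnd_def numeral_3_eq_3 numeral_2_eq_2)
    moreover have "c = (\<lambda>x. (c [Th, XiL] + c [Xi, Th]) * z x + dc b x)"
      using chain_O2_decomposition[OF c] unfolding z_def b_def .
    ultimately show ?thesis by blast
  qed
  ultimately show ?thesis unfolding H_iso_k_def by blast
qed

text \<open>Nonzero homology occurs exactly in these lengths n and degrees m.  Since only
  \<theta> has degree 0, q = n - m counts the letters \<theta> of a word.\<close>
definition nontrivial :: "idem \<Rightarrow> nat \<Rightarrow> int \<Rightarrow> bool" where
  "nontrivial s n m \<longleftrightarrow> (let q = int n - m in q \<ge> 1 \<and>
     (if s = IdL then int n \<in> {4 * q - 1, 4 * q} else int n \<in> {4 * q - 3, 4 * q - 2}))"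

lemma nontrivial_reduction:
  "n \<ge> 1 \<Longrightarrow> nontrivial s (Suc (Suc n)) m \<longleftrightarrow> nontrivial (opp s) n (m - 1 - shift s)"
  by (cases s) (auto simp: nontrivial_def shift_def Let_def)

lemma homology_length_one:
  "(if nontrivial s 1 m then H_iso_k else H_zero) (cyc s 1 m :: (letter list \<Rightarrow> 'k::field) set) (bnd s 1 m)"
proof (cases s)
  case IdL
  have "\<not> nontrivial IdL 1 m" unfolding nontrivial_def Let_def by (simp; presburger)
  then show ?thesis using IdL homology_L1 by simp
next
  case IdO
  show ?thesis
  proof (cases "m = 0")
    case True then show ?thesis using IdO homology_O1 by (simp add: nontrivial_def)
  next
    case False
    then have "\<not> nontrivial s 1 m" using IdO by (simp add: nontrivial_def)
    moreover have "H_zero (cyc s 1 m :: (letter list \<Rightarrow> 'k) set) (bnd s 1 m)"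
      using False IdO by (intro H_zero_no_words) (auto simp: words_O1)
    ultimately show ?thesis by simp
  qed
qed

lemma homology_length_two:
  "(if nontrivial s 2 m then H_iso_k else H_zero) (cyc s 2 m :: (letter list \<Rightarrow> 'k::field) set) (bnd s 2 m)"
proof (cases s)
  case IdL
  have "\<not> nontrivial IdL 2 m" unfolding nontrivial_def Let_def by (simp; presburger)
  then show ?thesis using IdL homology_L2 by simp
next
  case IdO
  show ?thesis
  proof (cases "m = 1")
    case True then show ?thesis using IdO homology_O2 by (simp add: nontrivial_def)
  next
    case False
    then have "\<not> nontrivial s 2 m" using IdO by (simp add: nontrivial_def)
    moreover have "H_zero (cyc s 2 m :: (letter list \<Rightarrow> 'k) set) (bnd s 2 m)"
      using False IdO by (intro H_zero_no_words) (auto simp: words_O2)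
    ultimately show ?thesis by simp
  qed
qed

theorem homology_classification:
  assumes "n \<ge> 1"
  shows "(if nontrivial s n m then H_iso_k else H_zero) (cyc s n m :: (letter list \<Rightarrow> 'k::field) set) (bnd s n m)"
  using assms
proof (induction n arbitrary: s m rule: less_induct)
  case (less n)
  consider "n = 1" | "n = 2" | k where "n = Suc (Suc k)" "k \<ge> 1"
  proof -
    have "n = 1 \<or> n = 2 \<or> (\<exists>k. n = Suc (Suc k) \<and> k \<ge> 1)" using less.prems by presburger
    then show ?thesis using that by blast
  qed
  then show ?case
  proof cases
    case 1 then show ?thesis by (simp only: homology_length_one)
  next
    case 2 then show ?thesis by (simp only: homology_length_two)
  next
    case (3 k)
    then have "(if nontrivial (opp s) k (m - 1 - shift s) then H_iso_k else H_zero)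
        (cyc (opp s) k (m - 1 - shift s) :: (letter list \<Rightarrow> 'k) set) (bnd (opp s) k (m - 1 - shift s))"
      using less.IH by simp
    then show ?thesis
      using reduction[OF \<open>k \<ge> 1\<close>, of s m] nontrivial_reduction[OF \<open>k \<ge> 1\<close>, of s m]
      unfolding \<open>n = Suc (Suc k)\<close> by (cases "nontrivial s (Suc (Suc k)) m") simp_all
  qed
qed

section \<open>Comparison with the differential d\<close>

lemma Cwords_eq: "Cwords n = words IdL n"
  by (auto simp: Cwords_def Cword_def words_def)

lemma finite_words: "finite (words s n)"
proof -
  have "words s n \<subseteq> {xs. set xs \<subseteq> UNIV \<and> length xs = n}" by (auto simp: words_def)
  moreover have "finite {xs. set xs \<subseteq> (UNIV :: letter set) \<and> length xs = n}"
  proof (rule finite_lists_length_eq)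
    show "finite (UNIV :: letter set)"
      by (rule finite_subset[of _ "{Th, Et, Xi, XiL}"]) (use letter.exhaust in blast)+
  qed
  ultimately show ?thesis by (rule finite_subset)
qed

lemma merge_iff_unmerge:
  assumes j: "Suc j < length v"
  shows "merge j v = Some w \<longleftrightarrow> j < length w \<and> is_loop (w ! j) \<and> v = unmerge j w"
proof
  assume "merge j v = Some w"
  then obtain x where mx: "mult (v ! j) (v ! Suc j) = Some x" and w: "w = take j v @ x # drop (Suc (Suc j)) v"
    unfolding merge_def by (auto split: option.splits)
  have "j < length v" using j by simp
  then have jw: "j < length w" and wj: "w ! j = x" and tw: "take j w = take j v"
      and dw: "drop (Suc j) w = drop (Suc (Suc j)) v"
    using w by (simp_all add: nth_append)
  have fx: "factor x = [v ! j, v ! Suc j]" "is_loop x"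
    using mx by (cases "v ! j"; cases "v ! Suc j"; auto)+
  have "v = take j v @ v ! j # v ! Suc j # drop (Suc (Suc j)) v"
    using j by (metis Cons_nth_drop_Suc Suc_lessD append_take_drop_id)
  then have "unmerge j w = v" unfolding unmerge_def wj tw dw using fx by simp
  then show "j < length w \<and> is_loop (w ! j) \<and> v = unmerge j w" using jw wj fx by simp
next
  assume "j < length w \<and> is_loop (w ! j) \<and> v = unmerge j w"
  then have jw: "j < length w" and lw: "is_loop (w ! j)" and v: "v = unmerge j w" by auto
  obtain t1 t2 where f: "factor (w ! j) = [t1, t2]" and m: "mult t1 t2 = Some (w ! j)"
    using lw by (cases "w ! j") (auto simp: is_loop_def)
  have v': "v = take j w @ t1 # t2 # drop (Suc j) w" using v f by (simp add: unmerge_def)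
  have tj: "length (take j w) = j" using jw by simp
  have "v ! j = t1" "v ! Suc j = t2" using v' tj by (simp_all add: nth_append)
  moreover have "take j v = take j w" "drop (Suc (Suc j)) v = drop (Suc j) w" using v' tj by simp_all
  ultimately show "merge j v = Some w" using m jw
    by (simp add: merge_def id_take_nth_drop[symmetric])
qed

lemma dcoef_eq: "dcoef v w = (\<Sum>j<length v - 1. if merge j v = Some w then sgn_at j else 0)"
  unfolding dcoef_def sgn_at_def by (rule sum.cong) (auto split: option.splits)

lemma merge_summand:
  assumes c: "c \<in> ch IdL n m" and j: "Suc j < n"
  shows "(\<Sum>v\<in>words IdL n. c v * (if merge j v = Some w then sgn_at j else 0)) =
    (if j < length w \<and> is_loop (w ! j) then sgn_at j * c (unmerge j w) else 0)"
proof -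
  have "(\<Sum>v\<in>words IdL n. c v * (if merge j v = Some w then sgn_at j else 0)) =
      (\<Sum>v\<in>words IdL n. if unmerge j w = v then (if j < length w \<and> is_loop (w ! j) then sgn_at j * c v else 0) else 0)"
  proof (rule sum.cong)
    fix v assume "v \<in> words IdL n"
    then have "Suc j < length v" using j by (simp add: words_def)
    then show "c v * (if merge j v = Some w then sgn_at j else 0) =
        (if unmerge j w = v then (if j < length w \<and> is_loop (w ! j) then sgn_at j * c v else 0) else 0)"
      using merge_iff_unmerge[of j v w] by (auto simp: mult.commute)
  qed simp
  also have "\<dots> = (if unmerge j w \<in> words IdL n
      then (if j < length w \<and> is_loop (w ! j) then sgn_at j * c (unmerge j w) else 0) else 0)"
    by (rule sum.delta'[OF finite_words])
  also have "\<dots> = (if j < length w \<and> is_loop (w ! j) then sgn_at j * c (unmerge j w) else 0)"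
    using ch_out[OF c, of "unmerge j w"] by auto
  finally show ?thesis .
qed

lemma dd_eq_dc:
  assumes c: "c \<in> ch IdL n m"
  shows "dd n c w = dc c w"
proof -
  define G where "G j = (if j < length w \<and> is_loop (w ! j) then sgn_at j * c (unmerge j w) else 0)" for j
  have "dd n c w = (\<Sum>v\<in>words IdL n. \<Sum>j<n - 1. c v * (if merge j v = Some w then sgn_at j else 0))"
    unfolding dd_def Cwords_eq dcoef_eq sum_distrib_left by (rule sum.cong) (auto simp: words_def)
  also have "\<dots> = (\<Sum>j<n - 1. \<Sum>v\<in>words IdL n. c v * (if merge j v = Some w then sgn_at j else 0))"
    by (rule sum.swap)
  also have "\<dots> = (\<Sum>j<n - 1. G j)"
  proof (rule sum.cong)
    fix j assume "j \<in> {..<n - 1}"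
    then show "(\<Sum>v\<in>words IdL n. c v * (if merge j v = Some w then sgn_at j else 0)) = G j"
      unfolding G_def by (intro merge_summand[OF c]) auto
  qed simp
  also have "\<dots> = (\<Sum>j<length w. G j)"
  proof (cases "Suc (length w) = n")
    case False
    have "G j = 0" for j
      using ch_length[OF c, of "unmerge j w"] length_unmerge[of j w] False by (auto simp: G_def)
    then show ?thesis by simp
  qed auto
  also have "\<dots> = dc c w" unfolding dc_def G_def by (rule sum.cong) auto
  finally show ?thesis .
qed

lemma chains_eq: "chains n m = ch IdL n m"
  by (auto simp: chains_def ch_def Cwords_eq)

lemma cycles_eq: "(cycles n m :: (letter list \<Rightarrow> 'k::field) set) = cyc IdL n m"
proof -
  have "dd n c = dc c" if "c \<in> ch IdL n m" for c :: "letter list \<Rightarrow> 'k"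
    using dd_eq_dc[OF that] by (rule ext)
  then show ?thesis by (auto simp: cycles_def cyc_def chains_eq)
qed

lemma boundaries_eq: "(boundaries n m :: (letter list \<Rightarrow> 'k::field) set) = bnd IdL n m"
  unfolding boundaries_def bnd_def chains_eq
  by (rule image_cong) (auto intro: ext dd_eq_dc)

theorem mainTheorem2:
  assumes char2: "(2::'k::field) \<noteq> 0" and char3: "(3::'k) \<noteq> 0"
    and n: "n \<ge> 1"
  shows "H_zero (cycles n (int n) :: (letter list \<Rightarrow> 'k) set) (boundaries n (int n)) \<and>
         (if n \<in> {3, 4} then H_iso_k else H_zero)
           (cycles n (int n - 1) :: (letter list \<Rightarrow> 'k) set) (boundaries n (int n - 1)) \<and>
         (if n \<in> {7, 8} then H_iso_k else H_zero)
           (cycles n (int n - 2) :: (letter list \<Rightarrow> 'k) set) (boundaries n (int n - 2)) \<and>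
         (if n \<in> {11, 12} then H_iso_k else H_zero)
           (cycles n (int n - 3) :: (letter list \<Rightarrow> 'k) set) (boundaries n (int n - 3))"
proof -
  have homology: "(if nontrivial IdL n m then H_iso_k else H_zero)
      (cycles n m :: (letter list \<Rightarrow> 'k) set) (boundaries n m)" for m
    using homology_classification[OF n, of IdL m] by (simp add: cycles_eq boundaries_eq)
  have "\<not> nontrivial IdL n (int n)"
    and "nontrivial IdL n (int n - 1) \<longleftrightarrow> n \<in> {3, 4}"
    and "nontrivial IdL n (int n - 2) \<longleftrightarrow> n \<in> {7, 8}"
    and "nontrivial IdL n (int n - 3) \<longleftrightarrow> n \<in> {11, 12}"
    by (auto simp: nontrivial_def)
  then show ?thesis
    using homology[of "int n"] homology[of "int n - 1"] homology[of "int n - 2"] homology[of "int n - 3"]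
    by simp
qed

end
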